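(* For all nonnegative integers $k,d,i,j$ with $k>0$, $$F_{\,kd+id+j(i+1)(2(k-1)d+1),\;d+j(2(k-1)d+1)}=1.$$
   Context: Define maps $G,S:\mathbb Z^2\to\mathbb Z^2$ by $G(x,y)=(x+y,y)$ and $S(x,y)=(3x-2y+1,\,2x-y+1)$. Define the array $(F_{n,k})_{n,k\ge 0}$ by $F_{0,0}=1$ and, for $(n,k)\neq(0,0)$, $F_{n,k}$ is the number of finite words $w=w_1w_2\cdots w_m$ ($m\ge 0$) over the alphabet $\{G,S\}$ with $w_1\circ w_2\circ\cdots\circ w_m(1,1)=(n,k)$ (the empty word acts as the identity). Equivalently: start with all entries $0$, set $F_{0,0}=1$ and $F_{1,1}=1$, and thereafter, whenever an entry $F_{n,k}$ with $n\ge 1$ changes its value, increase $F_{n+k,k}$ and $F_{3n+1-2k,\,2n+1-k}$ by $1$. *)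

theory Defs
  imports Main
begin

datatype letter = G | S

fun act :: "letter \<Rightarrow> int \<times> int \<Rightarrow> int \<times> int" where
  "act G (x, y) = (x + y, y)"
| "act S (x, y) = (3*x - 2*y + 1, 2*x - y + 1)"

definition eval_word :: "letter list \<Rightarrow> int \<times> int" where
  "eval_word w = foldr act w (1, 1)"

definition F :: "nat \<Rightarrow> nat \<Rightarrow> nat" where
  "F n k = (if n = 0 \<and> k = 0 then 1
            else card {w. eval_word w = (int n, int k)})"

end

theory Submission
  imports Defs
begin

text \<open>Both maps send the cone \<open>1 \<le> y \<le> x\<close> into itself, \<open>G\<close> into the part \<open>2y \<le> x\<close>
  and \<open>S\<close> into the part \<open>2x + 1 < 3y\<close>; these are disjoint and miss the start \<open>(1, 1)\<close>.
  Hence the outermost letter of a word can be read off its value and, both maps being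
  injective, distinct words reach distinct points: \<open>F\<close> is \<open>1\<close> at every reached point.
  The given point is reached by \<open>G\<^sup>i S\<^sup>j G\<^sup>k\<^sup>-\<^sup>1 S\<^sup>d\<^sup>-\<^sup>1\<close> (and by \<open>G\<^sup>i S\<^sup>j\<^sup>-\<^sup>1\<close> when \<open>d = 0\<close>).\<close>

lemma eval_word_Nil [simp]: "eval_word [] = (1, 1)"
  by (simp add: eval_word_def)

lemma eval_word_Cons [simp]: "eval_word (a # w) = act a (eval_word w)"
  by (simp add: eval_word_def)

lemma eval_word_in_cone: "eval_word w = (x, y) \<Longrightarrow> 1 \<le> y \<and> y \<le> x"
proof (induction w arbitrary: x y)
  case Nil
  then show ?case by simp
next
  case (Cons a w)
  obtain x0 y0 where "eval_word w = (x0, y0)" by fastforce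
  with Cons show ?case by (cases a) auto
qed

lemma eval_word_Cons_G_bound: "eval_word (G # w) = (x, y) \<Longrightarrow> 2 * y \<le> x"
  using eval_word_in_cone[of w] by (cases "eval_word w") auto

lemma eval_word_Cons_S_bound: "eval_word (S # w) = (x, y) \<Longrightarrow> 2 * x + 1 < 3 * y"
  using eval_word_in_cone[of w] by (cases "eval_word w") auto

lemma eval_word_Cons_neq_Nil: "eval_word (a # w) \<noteq> eval_word []"
  using eval_word_Cons_G_bound[of w 1 1] eval_word_Cons_S_bound[of w 1 1] by (cases a) auto

lemma eval_word_Cons_eq_imp_same_head:
  assumes "eval_word (a # w) = eval_word (b # v)"
  shows "a = b"
proof (rule ccontr)
  assume "a \<noteq> b"
  obtain x y where xy: "eval_word (a # w) = (x, y)" by fastforce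
  then have "1 \<le> y" using eval_word_in_cone by blast
  with \<open>a \<noteq> b\<close> xy assms show False
    using eval_word_Cons_G_bound[of w x y] eval_word_Cons_S_bound[of w x y]
      eval_word_Cons_G_bound[of v x y] eval_word_Cons_S_bound[of v x y]
    by (cases a; cases b) auto
qed

lemma inj_act: "inj (act a)"
  by (rule injI, cases a) (auto elim!: act.elims)

lemma inj_eval_word: "inj eval_word"
proof (rule injI)
  show "eval_word w = eval_word v \<Longrightarrow> w = v" for w v
  proof (induction w arbitrary: v)
    case Nil
    then show ?case using eval_word_Cons_neq_Nil by (metis list.exhaust)
  next
    case (Cons a w)
    then obtain b v' where v: "v = b # v'"
      using eval_word_Cons_neq_Nil by (metis list.exhaust)
    with Cons.prems have "a = b" by (blast intro: eval_word_Cons_eq_imp_same_head)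
    with Cons.prems v have "eval_word w = eval_word v'"
      using inj_act[of a] by (auto dest: injD)
    with Cons.IH v \<open>a = b\<close> show ?case by simp
  qed
qed

lemma F_eq_1_if_reached:
  assumes "eval_word w = (int n, int k)"
  shows "F n k = 1"
proof -
  have "{w'. eval_word w' = (int n, int k)} = {w}"
    using assms injD[OF inj_eval_word] by force
  then show ?thesis by (simp add: F_def)
qed

lemma foldr_act_replicate_G: "foldr act (replicate n G) (x, y) = (x + int n * y, y)"
  by (induction n) (auto simp del: foldr_replicate simp: algebra_simps)

text \<open>\<open>S\<close> preserves \<open>x - y\<close>, so its powers are translations along the diagonal.\<close>
lemma foldr_act_replicate_S:
  "foldr act (replicate n S) (x, y) = (x + int n * (2 * (x - y) + 1), y + int n * (2 * (x - y) + 1))"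
  by (induction n) (auto simp del: foldr_replicate simp: algebra_simps)

theorem theorem14:
  fixes k d i j :: nat
  assumes "k > 0"
  shows "F (k*d + i*d + j*(i+1)*(2*(k-1)*d+1)) (d + j*(2*(k-1)*d+1)) = 1"
proof (cases "d = 0")
  case True
  show ?thesis
  proof (cases "j = 0")
    case True
    with \<open>d = 0\<close> show ?thesis by (simp add: F_def)
  next
    case False
    then have "eval_word (replicate i G @ replicate (j - 1) S) = (int (j * (i + 1)), int j)"
      by (simp add: eval_word_def foldr_act_replicate_G foldr_act_replicate_S of_nat_diff
          algebra_simps del: foldr_replicate)
    with \<open>d = 0\<close> show ?thesis by (simp add: F_eq_1_if_reached)
  qed
next
  case False
  then obtain d' where d': "d = Suc d'" using not0_implies_Suc by blast
  obtain k' where k': "k = Suc k'" using assms gr0_implies_Suc by blast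
  have "eval_word (replicate i G @ replicate j S @ replicate k' G @ replicate d' S)
     = (int (k*d + i*d + j*(i+1)*(2*(k-1)*d+1)), int (d + j*(2*(k-1)*d+1)))"
    by (simp add: eval_word_def foldr_act_replicate_G foldr_act_replicate_S d' k'
        algebra_simps del: foldr_replicate)
  then show ?thesis by (rule F_eq_1_if_reached)
qed

end
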